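(* For every prime power $q$ and integer $k\ge 2$, there is a strong blocking set in $\mathrm{PG}(k-1,q)$ of size at most \[(q+1)\frac{2k}{\log_q\left(\frac{q^4}{q^3-q+1}\right)}.\]
   Context: $\mathrm{PG}(k-1,q)$ is the projective space whose points, lines, ..., hyperplanes are the $1$-, $2$-, ..., $(k-1)$-dimensional vector subspaces of $\mathbb{F}_q^k$. A strong blocking set in $\mathrm{PG}(k-1,q)$ is a set $S$ of points such that for every hyperplane $H$, the points of $S\cap H$ span $H$. *)

theory Defs
  imports "HOL-Analysis.Finite_Cartesian_Product"
begin

text \<open>The projective space PG(k-1,q) is modelled via the vector space 'a^'n over a finite
field 'a (q = CARD('a)) with k = CARD('n).\<close>

definition fsubspace :: "('a::field ^ 'n) set \<Rightarrow> bool" where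
  "fsubspace V \<longleftrightarrow> module.subspace (vector_scalar_mult :: 'a \<Rightarrow> 'a^'n \<Rightarrow> 'a^'n) V"

definition fspan :: "('a::field ^ 'n) set \<Rightarrow> ('a ^ 'n) set" where
  "fspan X = module.span (vector_scalar_mult :: 'a \<Rightarrow> 'a^'n \<Rightarrow> 'a^'n) X"

definition fdim :: "('a::field ^ 'n) set \<Rightarrow> nat" where
  "fdim V = vector_space.dim (vector_scalar_mult :: 'a \<Rightarrow> 'a^'n \<Rightarrow> 'a^'n) V"

definition proj_points :: "('a::field ^ 'n) set set" where
  "proj_points = {P. fsubspace P \<and> fdim P = 1}"

definition proj_hyperplanes :: "('a::field ^ 'n::finite) set set" where
  "proj_hyperplanes = {H. fsubspace H \<and> fdim H = CARD('n) - 1}"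

definition strong_blocking_set :: "('a::field ^ 'n::finite) set set \<Rightarrow> bool" where
  "strong_blocking_set S \<longleftrightarrow> S \<subseteq> proj_points \<and>
     (\<forall>H \<in> proj_hyperplanes. fspan (\<Union>{P \<in> S. P \<subseteq> H}) = H)"

end

theory Submission
  imports Defs "HOL-Analysis.Cartesian_Space"
begin

(* The points of S lying in a hyperplane ker f fail to span it exactly when they all lie in
   ker f \<inter> ker g for a functional g independent of f; call a subspace W confined by (f, g)
   if W \<inter> ker f \<subseteq> ker g.  Take for S the points on m lines spanned by random pairs of
   vectors (u, v).  For a fixed independent pair (f, g) the values (f u, g u, f v, g v) are
   uniform on F_q^4, and a confined line forces every linear relation between f u and f v to
   hold between g u and g v, which happens for at most q^3 - q + 1 of the q^4 values.  Each
   obstruction is represented by the q (q - 1) pairs (f, c g + e f) with c \<noteq> 0, so by the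
   first-moment method some choice of lines gives a strong blocking set of size (q + 1) m as
   soon as q^(2k) ((q^3 - q + 1) / q^4)^m < q (q - 1), and m = floor (2k / log_q (q^4 / (q^3 - q + 1)))
   suffices for q \<ge> 3.  For q = 2 lines are too weak (16/7 > 2); instead
   floor (3 \<cdot> 2k / log_2 (16/7)) random points, each confined with probability 3/4, do the job. *)

section \<open>Linear functionals\<close>

definition dot :: "'a::field^'n \<Rightarrow> 'a^'n \<Rightarrow> 'a" where
  "dot f x = (\<Sum>i\<in>UNIV. f$i * x$i)"

lemma dot_add [simp]: "dot f (x + y) = dot f x + dot f y"
  by (simp add: dot_def distrib_left sum.distrib)

lemma dot_scale [simp]: "dot f (c *s x) = c * dot f x"
  by (simp add: dot_def sum_distrib_left mult.left_commute)

lemma dot_diff [simp]: "dot f (x - y) = dot f x - dot f y"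
  by (simp add: dot_def right_diff_distrib sum_subtractf)

lemma dot_zero [simp]: "dot f 0 = 0"
  by (simp add: dot_def)

lemma dot_add_left [simp]: "dot (f + g) x = dot f x + dot g x"
  by (simp add: dot_def distrib_right sum.distrib)

lemma dot_scale_left [simp]: "dot (c *s f) x = c * dot f x"
  by (simp add: dot_def sum_distrib_left mult.assoc)

lemma dot_diff_left [simp]: "dot (f - g) x = dot f x - dot g x"
  by (simp add: dot_def left_diff_distrib sum_subtractf)

interpretation vec_scalar: vector_space_pair "(*s) :: 'a::field \<Rightarrow> 'a^'n \<Rightarrow> 'a^'n" "(*) :: 'a \<Rightarrow> 'a \<Rightarrow> 'a" ..

lemma linear_dot: "Vector_Spaces.linear (*s) (*) (dot f)"
  by unfold_locales simp_all

lemma dot_eq_0_on_span: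
  assumes "\<And>a. a \<in> A \<Longrightarrow> dot f a = 0" "x \<in> vec.span A"
  shows "dot f x = 0"
  using vec_scalar.linear_eq_0_on_span[OF linear_dot] assms by blast

lemma linear_eq_dot:
  fixes F :: "'a::field^'n \<Rightarrow> 'a"
  assumes "Vector_Spaces.linear (*s) (*) F"
  shows "F = dot (\<chi> i. F (axis i 1))"
proof
  interpret F: Vector_Spaces.linear "(*s)" "(*)" F by (fact assms)
  fix x
  have "F x = F (\<Sum>i\<in>UNIV. x$i *s axis i 1)" by (simp add: basis_expansion)
  also have "\<dots> = (\<Sum>i\<in>UNIV. x$i * F (axis i 1))" by (simp add: F.sum F.scale)
  finally show "F x = dot (\<chi> i. F (axis i 1)) x" by (simp add: dot_def mult.commute)
qed

lemma exists_dot_dual: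
  assumes "vec.independent B" "z \<in> B"
  shows "\<exists>f. dot f z = 1 \<and> (\<forall>b\<in>B - {z}. dot f b = 0)"
proof -
  define F where "F = vec_scalar.construct B (\<lambda>b. if b = z then (1::'a::field) else 0)"
  have "Vector_Spaces.linear (*s) (*) F"
    unfolding F_def by (rule vec_scalar.linear_construct[OF assms(1)])
  moreover have "F b = (if b = z then 1 else 0)" if "b \<in> B" for b
    unfolding F_def by (rule vec_scalar.construct_basis[OF assms(1) that])
  ultimately show ?thesis
    using assms(2) by (metis Diff_iff insert_iff linear_eq_dot)
qed

lemma exists_dot_separating:
  fixes U :: "('a::field^'n) set"
  assumes "vec.subspace U" "y \<notin> U"
  shows "\<exists>g. dot g y = 1 \<and> (\<forall>x\<in>U. dot g x = 0)"
proof -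
  obtain B where B: "B \<subseteq> U" "vec.independent B" "vec.span B = U"
    using vec.basis_exists[of U] vec.span_subspace[OF _ _ assms(1)] by metis
  have "vec.independent (insert y B)"
    using vec.independent_insertI B assms(2) by blast
  then obtain g where g: "dot g y = 1" "\<forall>b\<in>insert y B - {y}. dot g b = 0"
    using exists_dot_dual by blast
  have "dot g x = 0" if "x \<in> U" for x
    using dot_eq_0_on_span[of B g x] g(2) B assms(2) that by blast
  with g(1) show ?thesis by blast
qed

lemma proj_hyperplane_eq_kernel:
  fixes H :: "('a::field^'n::finite) set"
  assumes "H \<in> proj_hyperplanes"
  shows "\<exists>f y. dot f y = 1 \<and> H = {x. dot f x = 0}"
proof -
  have H: "vec.subspace H" "vec.dim H = CARD('n) - 1"
    using assms unfolding proj_hyperplanes_def fsubspace_def fdim_def by auto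
  have span_H: "vec.span H = H"
    using H(1) by (simp add: vec.span_eq_iff)
  have "0 < CARD('n)" by simp
  then have "vec.dim H < vec.dim (UNIV :: ('a^'n) set)"
    unfolding H(2) vec.dim_UNIV card_cart_basis by linarith
  then have "vec.span H \<noteq> UNIV"
    by (metis vec.dim_span less_irrefl)
  then obtain y where y: "y \<notin> H" using span_H by blast
  then obtain f where f: "dot f y = 1" "\<forall>x\<in>H. dot f x = 0"
    using exists_dot_separating[OF H(1)] by blast
  have "vec.dim (insert y H) = vec.dim (UNIV :: ('a^'n) set)"
    using y H \<open>0 < CARD('n)\<close> by (simp add: vec.dim_insert span_H vec.dim_UNIV card_cart_basis)
  then have span: "vec.span (insert y H) = UNIV"
    by (metis vec.dim_eq_full vec.dim_UNIV vec.dimension_def)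
  have "x \<in> H" if "dot f x = 0" for x
  proof -
    obtain c where c: "x - c *s y \<in> H"
      using span vec.span_breakdown_eq span_H by blast
    then have "dot f (x - c *s y) = 0" using f(2) by blast
    then have "c = 0" using f(1) that by simp
    then show ?thesis using c by simp
  qed
  with f show ?thesis by blast
qed

section \<open>Points on lines\<close>

lemma span_singleton_in_proj_points:
  fixes x :: "'a::field^'n"
  assumes "x \<noteq> 0"
  shows "vec.span {x} \<in> proj_points"
proof -
  have "vec.independent {x}"
    using assms vec.independent_insertI[of x "{}"] by auto
  then have "vec.dim {x} = 1" using vec.dim_eq_card_independent by fastforce
  then show ?thesis unfolding proj_points_def fsubspace_def fdim_def by simp
qed

lemma proj_pointE:
  fixes P :: "('a::field^'n) set"
  assumes "P \<in> proj_points"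
  obtains x where "x \<noteq> 0" "P = vec.span {x}"
proof -
  have P: "vec.subspace P" "vec.dim P = 1"
    using assms unfolding proj_points_def fsubspace_def fdim_def by auto
  obtain B where B: "B \<subseteq> P" "vec.independent B" "P \<subseteq> vec.span B" "card B = 1"
    using vec.basis_exists[of P] P(2) by metis
  then obtain x where x: "B = {x}" by (meson card_1_singletonE)
  have "vec.span {x} \<subseteq> P" using vec.span_minimal[OF _ P(1)] B(1) x by blast
  moreover have "x \<noteq> 0" using B(2) x vec.dependent_zero by blast
  ultimately show ?thesis using that B(3) x by blast
qed

lemma span_singleton_scale:
  fixes x :: "'a::field^'n"
  assumes "c \<noteq> 0"
  shows "vec.span {c *s x} = vec.span {x}"
proof
  show "vec.span {c *s x} \<subseteq> vec.span {x}"
    by (simp add: vec.span_minimal vec.span_base vec.span_scale)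
  have "x = (1 / c) *s (c *s x)" using assms by simp
  then have "x \<in> vec.span {c *s x}" by (metis vec.span_scale vec.span_base singletonI)
  then show "vec.span {x} \<subseteq> vec.span {c *s x}" by (simp add: vec.span_minimal)
qed

lemma card_points_in_span_singleton:
  fixes u :: "'a::{field,finite}^'n"
  shows "card {P \<in> proj_points. P \<subseteq> vec.span {u}} \<le> 1"
proof -
  have "{P \<in> proj_points. P \<subseteq> vec.span {u}} \<subseteq> {vec.span {u}}"
  proof
    fix P assume P: "P \<in> {P \<in> proj_points. P \<subseteq> vec.span {u}}"
    then obtain x where x: "x \<noteq> 0" "P = vec.span {x}" by (blast elim: proj_pointE)
    then have "x \<in> vec.span {u}" using P vec.span_base[of x "{x}"] by blast
    then obtain c where c: "x = c *s u" by (auto simp: vec.span_singleton)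
    with x have "c \<noteq> 0" by auto
    with x c show "P \<in> {vec.span {u}}" by (simp add: span_singleton_scale)
  qed
  then have "card {P \<in> proj_points. P \<subseteq> vec.span {u}} \<le> card {vec.span {u}}"
    by (rule card_mono[rotated]) simp
  then show ?thesis by simp
qed

lemma proj_point_in_span_pair:
  fixes u v :: "'a::field^'n"
  assumes "P \<in> proj_points" "P \<subseteq> vec.span {u, v}"
  shows "P = vec.span {v} \<or> (\<exists>t. P = vec.span {u + t *s v})"
proof -
  obtain x where x: "x \<noteq> 0" "P = vec.span {x}"
    using assms(1) by (blast elim: proj_pointE)
  then have "x \<in> vec.span {u, v}" using assms(2) vec.span_base[of x "{x}"] by blast
  then obtain a where "x - a *s u \<in> vec.span {v}" using vec.span_breakdown_eq by blast
  then obtain b where "x - a *s u = b *s v" using vec.span_singleton by auto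
  then have xab: "x = a *s u + b *s v" by (simp add: algebra_simps)
  show ?thesis
  proof (cases "a = 0")
    case True
    with xab have "x = b *s v" by simp
    with x have "P = vec.span {v}" by (metis span_singleton_scale vector_smult_lzero)
    then show ?thesis by simp
  next
    case False
    then have "x = a *s (u + (b / a) *s v)" using xab by (simp add: vector_add_ldistrib)
    then have "P = vec.span {u + (b / a) *s v}" using x(2) False by (simp add: span_singleton_scale)
    then show ?thesis by blast
  qed
qed

lemma card_points_in_span_pair:
  fixes u v :: "'a::{field,finite}^'n"
  shows "card {P \<in> proj_points. P \<subseteq> vec.span {u, v}} \<le> CARD('a) + 1"
proof -
  have "{P \<in> proj_points. P \<subseteq> vec.span {u, v}} \<subseteq> insert (vec.span {v}) (range (\<lambda>t. vec.span {u + t *s v}))"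
    using proj_point_in_span_pair by blast
  then have "card {P \<in> proj_points. P \<subseteq> vec.span {u, v}}
      \<le> card (insert (vec.span {v}) (range (\<lambda>t::'a. vec.span {u + t *s v})))"
    by (rule card_mono[rotated]) simp
  also have "\<dots> \<le> Suc (card (range (\<lambda>t::'a. vec.span {u + t *s v})))"
    by (rule card_insert_le_m1) simp_all
  also have "card (range (\<lambda>t::'a. vec.span {u + t *s v})) \<le> CARD('a)"
    by (rule card_image_le) simp
  finally show ?thesis by simp
qed

lemma card_points_in_Union_le:
  assumes "finite \<W>" "\<And>W. W \<in> \<W> \<Longrightarrow> card {P \<in> proj_points. P \<subseteq> W} \<le> s"
  shows "card {P \<in> proj_points. \<exists>W\<in>\<W>. P \<subseteq> W} \<le> s * card \<W>"
proof -
  have "{P \<in> proj_points. \<exists>W\<in>\<W>. P \<subseteq> W} = (\<Union>W\<in>\<W>. {P \<in> proj_points. P \<subseteq> W})"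
    by auto
  then have "card {P \<in> proj_points. \<exists>W\<in>\<W>. P \<subseteq> W} \<le> (\<Sum>W\<in>\<W>. card {P \<in> proj_points. P \<subseteq> W})"
    using card_UN_le[OF assms(1)] by simp
  also have "\<dots> \<le> s * card \<W>"
    using sum_mono[of \<W> "\<lambda>W. card {P \<in> proj_points. P \<subseteq> W}" "\<lambda>_. s"] assms(2)
    by (simp add: mult.commute)
  finally show ?thesis .
qed

section \<open>Confining pairs of functionals\<close>

text \<open>Linear independence of \<open>f\<close> and \<open>g\<close>, witnessed by a dual pair of vectors.\<close>

definition indep_pairs :: "(('a::field^'n) \<times> ('a^'n)) set" where
  "indep_pairs = {(f, g). \<exists>a b. dot f a = 1 \<and> dot g a = 0 \<and> dot f b = 0 \<and> dot g b = 1}"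

fun confined :: "('a::field^'n) \<times> ('a^'n) \<Rightarrow> ('a^'n) set \<Rightarrow> bool" where
  "confined (f, g) W \<longleftrightarrow> (\<forall>x\<in>W. dot f x = 0 \<longrightarrow> dot g x = 0)"

lemma card_indep_pairs_le:
  "card (indep_pairs :: (('a::{field,finite}^'n) \<times> ('a^'n)) set) \<le> CARD('a)^(2 * CARD('n))"
proof -
  have "card (indep_pairs :: (('a^'n) \<times> ('a^'n)) set) \<le> CARD(('a^'n) \<times> ('a^'n))"
    by (rule card_mono) simp_all
  also have "\<dots> = CARD('a)^(2 * CARD('n))"
    by (simp add: card_prod CARD_vec flip: power_add mult_2)
  finally show ?thesis .
qed

lemma exists_indep_pair_vanishing_on:
  fixes U :: "('a::field^'n) set"
  assumes "dot f y = 1" "vec.subspace U" "U \<subset> {x. dot f x = 0}"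
  shows "\<exists>g. (f, g) \<in> indep_pairs \<and> U \<subseteq> {x. dot g x = 0}"
proof -
  obtain z where z: "dot f z = 0" "z \<notin> U"
    using assms(3) by blast
  obtain g0 where g0: "dot g0 z = 1" "\<forall>x\<in>U. dot g0 x = 0"
    using exists_dot_separating[OF assms(2) z(2)] by blast
  define g where "g = g0 - dot g0 y *s f"
  have "dot f y = 1 \<and> dot g y = 0 \<and> dot f z = 0 \<and> dot g z = 1"
    using assms(1) z(1) g0(1) by (simp add: g_def)
  then have "(f, g) \<in> indep_pairs"
    unfolding indep_pairs_def by blast
  moreover have "U \<subseteq> {x. dot g x = 0}"
    using assms(3) g0(2) by (auto simp: g_def)
  ultimately show ?thesis by blast
qed

lemma strong_blocking_set_if_unconfined:
  fixes \<W> :: "('a::field^'n::finite) set set"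
  assumes subspace: "\<And>W. W \<in> \<W> \<Longrightarrow> vec.subspace W"
    and unconfined: "\<And>p. p \<in> indep_pairs \<Longrightarrow> \<exists>W\<in>\<W>. \<not> confined p W"
  shows "strong_blocking_set {P \<in> proj_points. \<exists>W\<in>\<W>. P \<subseteq> W}"
  unfolding strong_blocking_set_def
proof (intro conjI ballI)
  let ?S = "{P \<in> proj_points. \<exists>W\<in>\<W>. P \<subseteq> W}"
  show "?S \<subseteq> proj_points" by blast
  fix H :: "('a^'n) set" assume "H \<in> proj_hyperplanes"
  then have H: "vec.subspace H"
    unfolding proj_hyperplanes_def fsubspace_def by auto
  obtain f y where f: "dot f y = 1" "H = {x. dot f x = 0}"
    using proj_hyperplane_eq_kernel[OF \<open>H \<in> proj_hyperplanes\<close>] by blast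
  let ?U = "vec.span (\<Union>{P \<in> ?S. P \<subseteq> H})"
  have "?U \<subseteq> H" by (rule vec.span_minimal[OF _ H]) blast
  show "fspan (\<Union>{P \<in> ?S. P \<subseteq> H}) = H"
  proof (rule ccontr)
    assume "fspan (\<Union>{P \<in> ?S. P \<subseteq> H}) \<noteq> H"
    with \<open>?U \<subseteq> H\<close> f(2) have "?U \<subset> {x. dot f x = 0}"
      unfolding fspan_def by blast
    then obtain g where "(f, g) \<in> indep_pairs" and g: "?U \<subseteq> {x. dot g x = 0}"
      using exists_indep_pair_vanishing_on[OF f(1) vec.subspace_span] by blast
    then obtain W x where W: "W \<in> \<W>" and x: "x \<in> W" "dot f x = 0" "dot g x \<noteq> 0"
      using unconfined by fastforce
    then have "x \<noteq> 0" by auto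
    have "vec.span {x} \<subseteq> W"
      using vec.span_minimal[OF _ subspace[OF W]] x(1) by blast
    moreover have "vec.span {x} \<subseteq> H"
      using vec.span_minimal[OF _ H] x(2) f(2) by blast
    ultimately have "vec.span {x} \<in> {P \<in> ?S. P \<subseteq> H}"
      using W \<open>x \<noteq> 0\<close> by (auto intro: span_singleton_in_proj_points)
    then have "x \<in> ?U"
      by (meson UnionI vec.span_base singletonI)
    with g x(3) show False by blast
  qed
qed

section \<open>Counting confined points and lines\<close>

lemma card_fibres_eq_if_additive:
  fixes h :: "'a::{finite,ab_group_add} \<Rightarrow> 'b::ab_group_add"
  assumes add: "\<And>x y. h (x + y) = h x + h y"
  shows "card (h -` {h a}) = card (h -` {h b})"
proof -
  have shift: "h (x + (b - a)) = h x + h b - h a" for x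
    using add[of x "b - a"] add[of "b - a" a] by (simp add: algebra_simps)
  have "h -` {h b} = (\<lambda>x. x + (b - a)) ` h -` {h a}"
  proof (intro equalityI subsetI)
    fix x assume "x \<in> h -` {h b}"
    then have "x - (b - a) \<in> h -` {h a}"
      using shift[of "x - (b - a)"] by simp
    then show "x \<in> (\<lambda>x. x + (b - a)) ` h -` {h a}"
      by (rule rev_image_eqI) simp
  qed (auto simp: shift)
  then show ?thesis
    by (simp add: card_image)
qed

lemma card_vimage_if_additive_surj:
  fixes h :: "'a::{finite,ab_group_add} \<Rightarrow> 'b::{finite,ab_group_add}"
  assumes add: "\<And>x y. h (x + y) = h x + h y" and "surj h"
  shows "card (h -` C) * CARD('b) = card C * CARD('a)"
proof -
  define n where "n = card (h -` {0})"
  have fibre: "card (h -` {c}) = n" for c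
    using card_fibres_eq_if_additive[OF add] \<open>surj h\<close> unfolding n_def by (metis surjD)
  have card_vimage: "card (h -` D) = card D * n" for D
  proof -
    have "h -` D = (\<Union>c\<in>D. h -` {c})" by auto
    then have "card (h -` D) = (\<Sum>c\<in>D. card (h -` {c}))"
      by (simp add: card_UN_disjoint disjoint_iff)
    then show ?thesis by (simp add: fibre)
  qed
  show ?thesis
    using card_vimage[of C] card_vimage[of UNIV] by simp
qed

definition dot_pair :: "('a::field^'n) \<times> ('a^'n) \<Rightarrow> 'a^'n \<Rightarrow> 'a \<times> 'a" where
  "dot_pair p x = (dot (fst p) x, dot (snd p) x)"

lemma dot_pair_add: "dot_pair p (x + y) = dot_pair p x + dot_pair p y"
  by (simp add: dot_pair_def)

lemma surj_dot_pair:
  assumes "p \<in> indep_pairs"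
  shows "surj (dot_pair p)"
proof -
  obtain a b where "dot (fst p) a = 1" "dot (snd p) a = 0" "dot (fst p) b = 0" "dot (snd p) b = 1"
    using assms unfolding indep_pairs_def by auto
  then have "dot_pair p (s *s a + t *s b) = (s, t)" for s t
    by (simp add: dot_pair_def)
  then show ?thesis by (metis surj_def prod.collapse)
qed

lemma card_vimage_dot_pair:
  fixes p :: "('a::{field,finite}^'n) \<times> ('a^'n)"
  assumes "p \<in> indep_pairs"
  shows "card (dot_pair p -` C) * CARD('a)^2 = card C * CARD('a^'n)"
  using card_vimage_if_additive_surj[OF dot_pair_add surj_dot_pair[OF assms], of C]
  by (simp add: card_prod power2_eq_square)

lemma card_vimage_map_prod_dot_pair:
  fixes p :: "('a::{field,finite}^'n) \<times> ('a^'n)"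
  assumes "p \<in> indep_pairs"
  shows "card (map_prod (dot_pair p) (dot_pair p) -` C) * CARD('a)^4 = card C * CARD(('a^'n) \<times> ('a^'n))"
proof -
  have "surj (map_prod (dot_pair p) (dot_pair p))"
    using surj_dot_pair[OF assms] by (simp add: map_prod_surj)
  then show ?thesis
    using card_vimage_if_additive_surj[of "map_prod (dot_pair p) (dot_pair p)" C]
    by (simp add: dot_pair_add card_prod power4_eq_xxxx mult_ac plus_prod_def)
qed

lemma two_le_card_field: "2 \<le> CARD('a::{field,finite})"
  using card_mono[of UNIV "{0::'a, 1}"] by simp

lemma card_confined_point_values:
  "card {(x :: 'a::{field,finite}, y :: 'a). x = 0 \<longrightarrow> y = 0} + CARD('a) = CARD('a)^2 + 1"
proof -
  let ?E = "{0::'a} \<times> (UNIV - {0::'a})"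
  have C: "{(x :: 'a, y :: 'a). x = 0 \<longrightarrow> y = 0} = UNIV - ?E" by auto
  have "card {(x :: 'a, y :: 'a). x = 0 \<longrightarrow> y = 0} = CARD('a) * CARD('a) - (CARD('a) - 1)"
    unfolding C by (simp add: card_Diff_subset card_cartesian_product_singleton card_prod)
  moreover have "1 \<le> CARD('a)" "CARD('a) \<le> CARD('a) * CARD('a)" by (simp_all add: Suc_leI)
  ultimately show ?thesis unfolding power2_eq_square by arith
qed

lemma confined_line_values_cases:
  fixes a1 a2 b1 b2 :: "'a::field"
  assumes rel: "\<forall>\<alpha> \<beta>. \<alpha> * a1 + \<beta> * b1 = 0 \<longrightarrow> \<alpha> * a2 + \<beta> * b2 = 0"
  shows "a1 = 0 \<and> a2 = 0 \<and> (b1 = 0 \<longrightarrow> b2 = 0) \<or> a1 \<noteq> 0 \<and> b2 = b1 / a1 * a2"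
proof (cases "a1 = 0")
  case True
  then show ?thesis
    using rel[rule_format, of 1 0] rel[rule_format, of 0 1] by auto
next
  case False
  have "b1 * a2 - a1 * b2 = 0"
    using rel[rule_format, of b1 "- a1"] by (simp add: mult.commute)
  with False show ?thesis
    by (simp add: field_simps)
qed

lemma card_confined_line_values_le:
  "card {((a1 :: 'a::{field,finite}, a2), (b1, b2)).
      \<forall>\<alpha> \<beta>. \<alpha> * a1 + \<beta> * b1 = 0 \<longrightarrow> \<alpha> * a2 + \<beta> * b2 = 0} + CARD('a)
    \<le> CARD('a)^3 + 1"
  (is "card ?C + _ \<le> _")
proof -
  let ?C1 = "{(x :: 'a, y :: 'a). x = 0 \<longrightarrow> y = 0}"
  let ?A = "Pair (0 :: 'a, 0 :: 'a) ` ?C1"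
  let ?D = "((UNIV - {0 :: 'a}) \<times> (UNIV :: 'a set)) \<times> (UNIV :: 'a set)"
  let ?B = "(\<lambda>((a1, a2), l). ((a1, a2), (l * a1, l * a2))) ` ?D"
  have "?C \<subseteq> ?A \<union> ?B"
  proof
    fix z assume "z \<in> ?C"
    moreover obtain a1 a2 b1 b2 where z: "z = ((a1, a2), (b1, b2))" by (metis prod.collapse)
    ultimately have "a1 = 0 \<and> a2 = 0 \<and> (b1 = 0 \<longrightarrow> b2 = 0) \<or> a1 \<noteq> 0 \<and> b2 = b1 / a1 * a2"
      by (intro confined_line_values_cases) simp
    then show "z \<in> ?A \<union> ?B"
    proof
      assume "a1 \<noteq> 0 \<and> b2 = b1 / a1 * a2"
      then have "z \<in> ?B"
        unfolding z by (intro image_eqI[where x="((a1, a2), b1 / a1)"]) auto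
      then show ?thesis by blast
    qed (auto simp: z)
  qed
  then have "card ?C \<le> card (?A \<union> ?B)"
    by (rule card_mono[rotated]) simp
  also have "\<dots> \<le> card ?A + card ?B"
    by (rule card_Un_le)
  also have "card ?A \<le> card ?C1"
    by (rule card_image_le) simp
  also have "card ?B \<le> (CARD('a) - 1) * CARD('a) * CARD('a)"
    using card_image_le[of ?D] by (simp add: card_cartesian_product)
  finally have "card ?C + CARD('a) \<le> card ?C1 + CARD('a) + (CARD('a) - 1) * CARD('a) * CARD('a)"
    by simp
  also have "\<dots> = CARD('a)^3 + 1"
    using card_confined_point_values[where 'a='a] two_le_card_field[where 'a='a]
    by (cases "CARD('a)") (simp_all add: power2_eq_square power3_eq_cube algebra_simps)
  finally show ?thesis .
qed

lemma card_le_if_subset_vimage: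
  fixes h :: "'a::finite \<Rightarrow> 'b"
  assumes "X \<subseteq> h -` C" "card (h -` C) * d = card C * N" "0 < d" "real (card C) \<le> c"
  shows "real (card X) \<le> c / d * N"
proof -
  have "card X * d \<le> card (h -` C) * d"
    using assms(1) by (simp add: card_mono)
  also have "\<dots> = card C * N"
    by (rule assms(2))
  finally have "real (card X) * d \<le> real (card C) * N"
    unfolding of_nat_mult[symmetric] of_nat_le_iff .
  also have "\<dots> \<le> c * N"
    using assms(4) by (intro mult_right_mono) simp_all
  finally show ?thesis
    using assms(3) by (simp add: field_simps)
qed

lemma card_confined_points_le:
  fixes p :: "('a::{field,finite}^'n) \<times> ('a^'n)"
  assumes "p \<in> indep_pairs"
  shows "real (card {u. confined p (vec.span {u})})
    \<le> (real CARD('a)^2 - real CARD('a) + 1) / real CARD('a)^2 * real CARD('a^'n)"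
proof -
  obtain f g where p: "p = (f, g)" by fastforce
  let ?C = "{(x :: 'a, y :: 'a). x = 0 \<longrightarrow> y = 0}"
  have X: "{u. confined p (vec.span {u})} \<subseteq> dot_pair p -` ?C"
    using vec.span_base[of _ "{_}"] by (auto simp: p dot_pair_def)
  have C: "real (card ?C) \<le> real CARD('a)^2 - real CARD('a) + 1"
    using arg_cong[OF card_confined_point_values[where 'a='a], of real] by simp
  show ?thesis
    using card_le_if_subset_vimage[OF X card_vimage_dot_pair[OF assms] _ C] by simp
qed

lemma card_confined_lines_le:
  fixes p :: "('a::{field,finite}^'n) \<times> ('a^'n)"
  assumes "p \<in> indep_pairs"
  shows "real (card {(u, v). confined p (vec.span {u, v})})
    \<le> (real CARD('a)^3 - real CARD('a) + 1) / real CARD('a)^4 * real CARD(('a^'n) \<times> ('a^'n))"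
proof -
  obtain f g where p: "p = (f, g)" by fastforce
  let ?C = "{((a1 :: 'a, a2), (b1, b2)). \<forall>\<alpha> \<beta>. \<alpha> * a1 + \<beta> * b1 = 0 \<longrightarrow> \<alpha> * a2 + \<beta> * b2 = 0}"
  let ?h = "map_prod (dot_pair p) (dot_pair p)"
  have in_C: "?h (u, v) \<in> ?C" if "confined p (vec.span {u, v})" for u v
  proof -
    have "\<alpha> *s u + \<beta> *s v \<in> vec.span {u, v}" for \<alpha> \<beta>
      by (intro vec.span_add vec.span_scale vec.span_base) auto
    then have "dot g (\<alpha> *s u + \<beta> *s v) = 0" if "dot f (\<alpha> *s u + \<beta> *s v) = 0" for \<alpha> \<beta>
      using \<open>confined p (vec.span {u, v})\<close> that by (simp only: p confined.simps)
    then show ?thesis by (simp add: dot_pair_def p)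
  qed
  have X: "{(u, v). confined p (vec.span {u, v})} \<subseteq> ?h -` ?C"
  proof
    fix z assume "z \<in> {(u, v). confined p (vec.span {u, v})}"
    then obtain u v where "z = (u, v)" "confined p (vec.span {u, v})" by blast
    with in_C show "z \<in> ?h -` ?C" by blast
  qed
  have C: "real (card ?C) \<le> real CARD('a)^3 - real CARD('a) + 1"
    using card_confined_line_values_le[where 'a='a] by (simp flip: of_nat_add of_nat_power)
  show ?thesis
    using card_le_if_subset_vimage[OF X card_vimage_map_prod_dot_pair[OF assms] _ C] by simp
qed

section \<open>The first-moment argument\<close>

lemma sum_card_tuples_eq:
  assumes "finite \<Omega>" "finite \<P>"
  shows "(\<Sum>bs \<in> {..<m} \<rightarrow>\<^sub>E \<Omega>. card {p \<in> \<P>. \<forall>i<m. R p (bs i)}) = (\<Sum>p\<in>\<P>. card {\<beta> \<in> \<Omega>. R p \<beta>} ^ m)"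
proof -
  let ?X = "{..<m} \<rightarrow>\<^sub>E \<Omega>"
  have "finite ?X" using assms(1) by (simp add: finite_PiE)
  have "(\<Sum>bs\<in>?X. card {p \<in> \<P>. \<forall>i<m. R p (bs i)})
      = (\<Sum>bs\<in>?X. \<Sum>p\<in>\<P>. of_bool (\<forall>i<m. R p (bs i)))"
    using assms(2) by (simp add: Int_def)
  also have "\<dots> = (\<Sum>p\<in>\<P>. \<Sum>bs\<in>?X. of_bool (\<forall>i<m. R p (bs i)))"
    by (rule sum.swap)
  also have "\<dots> = (\<Sum>p\<in>\<P>. card ({..<m} \<rightarrow>\<^sub>E {\<beta> \<in> \<Omega>. R p \<beta>}))"
  proof (rule sum.cong[OF refl])
    fix p
    have "?X \<inter> {bs. \<forall>i<m. R p (bs i)} = {..<m} \<rightarrow>\<^sub>E {\<beta> \<in> \<Omega>. R p \<beta>}"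
      by (auto simp: PiE_iff)
    then show "(\<Sum>bs\<in>?X. of_bool (\<forall>i<m. R p (bs i))) = card ({..<m} \<rightarrow>\<^sub>E {\<beta> \<in> \<Omega>. R p \<beta>})"
      using \<open>finite ?X\<close> by simp
  qed
  also have "\<dots> = (\<Sum>p\<in>\<P>. card {\<beta> \<in> \<Omega>. R p \<beta>} ^ m)"
    by (simp add: card_PiE)
  finally show ?thesis .
qed

lemma exists_tuple_avoiding:
  fixes R :: "'p \<Rightarrow> 'b \<Rightarrow> bool" and \<rho> :: real
  assumes "finite \<Omega>" "\<Omega> \<noteq> {}" "finite \<P>"
    and many: "\<And>bs. bs \<in> {..<m} \<rightarrow>\<^sub>E \<Omega> \<Longrightarrow> \<exists>p\<in>\<P>. \<forall>i<m. R p (bs i)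
      \<Longrightarrow> N \<le> card {p \<in> \<P>. \<forall>i<m. R p (bs i)}"
    and rare: "\<And>p. p \<in> \<P> \<Longrightarrow> card {\<beta> \<in> \<Omega>. R p \<beta>} \<le> \<rho> * card \<Omega>"
    and small: "card \<P> * \<rho>^m < N"
  shows "\<exists>bs \<in> {..<m} \<rightarrow>\<^sub>E \<Omega>. \<forall>p\<in>\<P>. \<exists>i<m. \<not> R p (bs i)"
proof (rule ccontr)
  let ?X = "{..<m} \<rightarrow>\<^sub>E \<Omega>"
  assume "\<not> ?thesis"
  then have "N \<le> card {p \<in> \<P>. \<forall>i<m. R p (bs i)}" if "bs \<in> ?X" for bs
    using many that by blast
  then have "real (card ?X) * N \<le> (\<Sum>bs\<in>?X. real (card {p \<in> \<P>. \<forall>i<m. R p (bs i)}))"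
    using sum_mono[of ?X "\<lambda>_. real N"] by simp
  also have "\<dots> = (\<Sum>p\<in>\<P>. real (card {\<beta> \<in> \<Omega>. R p \<beta>}) ^ m)"
    using arg_cong[OF sum_card_tuples_eq[OF assms(1,3), of m R], of real] by simp
  also have "\<dots> \<le> (\<Sum>p\<in>\<P>. (\<rho> * card \<Omega>) ^ m)"
    by (intro sum_mono power_mono rare) simp_all
  also have "\<dots> = card \<P> * \<rho>^m * card ?X"
    using assms(1) by (simp add: card_PiE power_mult_distrib)
  also have "\<dots> < N * card ?X"
    using small assms(1,2) by (simp add: card_PiE card_gt_0_iff)
  finally show False by simp
qed

lemma card_confining_pairs_ge:
  fixes p :: "('a::{field,finite}^'n) \<times> ('a^'n)"
  assumes "p \<in> indep_pairs" "\<And>W. W \<in> \<W> \<Longrightarrow> confined p W"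
  shows "CARD('a) * (CARD('a) - 1) \<le> card {p' \<in> indep_pairs. \<forall>W\<in>\<W>. confined p' W}"
proof -
  obtain f g a b where p: "p = (f, g)" and ab: "dot f a = 1" "dot g a = 0" "dot f b = 0" "dot g b = 1"
    using assms(1) unfolding indep_pairs_def by auto
  let ?h = "\<lambda>(c, e). (f, c *s g + e *s f)"
  let ?D = "(UNIV - {0 :: 'a}) \<times> (UNIV :: 'a set)"
  have "inj_on ?h ?D"
  proof (rule inj_onI)
    fix x y assume "?h x = ?h y"
    then have "dot (snd (?h x)) b = dot (snd (?h y)) b" "dot (snd (?h x)) a = dot (snd (?h y)) a"
      by simp_all
    with ab show "x = y" by (simp add: prod_eq_iff split_beta)
  qed
  moreover have "?h ` ?D \<subseteq> {p' \<in> indep_pairs. \<forall>W\<in>\<W>. confined p' W}"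
  proof
    fix p' assume "p' \<in> ?h ` ?D"
    then obtain c e where "c \<noteq> 0" and p': "p' = (f, c *s g + e *s f)" by auto
    with ab have "dot f (a - (e / c) *s b) = 1 \<and> dot (c *s g + e *s f) (a - (e / c) *s b) = 0 \<and>
        dot f ((1 / c) *s b) = 0 \<and> dot (c *s g + e *s f) ((1 / c) *s b) = 1"
      by (simp add: field_simps)
    then have "p' \<in> indep_pairs"
      unfolding indep_pairs_def p' by blast
    moreover have "confined p' W" if "W \<in> \<W>" for W
      using assms(2)[OF that] by (simp add: p p')
    ultimately show "p' \<in> {p' \<in> indep_pairs. \<forall>W\<in>\<W>. confined p' W}"
      by blast
  qed
  ultimately have "card ?D \<le> card {p' \<in> indep_pairs. \<forall>W\<in>\<W>. confined p' W}"
    by (rule card_inj_on_le) simp_all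
  then show ?thesis
    by (simp add: card_cartesian_product mult.commute)
qed

lemma exists_unconfined_tuple:
  fixes Sp :: "'b::finite \<Rightarrow> ('a::{field,finite}^'n) set" and \<rho> :: real
  assumes rare: "\<And>p. p \<in> indep_pairs \<Longrightarrow> real (card {\<beta>. confined p (Sp \<beta>)}) \<le> \<rho> * CARD('b)"
    and small: "real CARD('a)^(2 * CARD('n)) * \<rho>^m < real CARD('a) * (real CARD('a) - 1)"
  shows "\<exists>bs. \<forall>p\<in>indep_pairs. \<exists>i<m. \<not> confined p (Sp (bs i))"
proof -
  let ?q = "CARD('a)"
  let ?R = "\<lambda>p \<beta>. confined p (Sp \<beta>)"
  have "2 \<le> ?q"
    by (rule two_le_card_field)
  have "card (indep_pairs :: (('a^'n) \<times> ('a^'n)) set) * \<rho>^m < ?q * (?q - 1)"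
  proof (cases "indep_pairs = ({} :: (('a^'n) \<times> ('a^'n)) set)")
    case True
    with \<open>2 \<le> ?q\<close> show ?thesis by simp
  next
    case False
    then obtain p :: "('a^'n) \<times> ('a^'n)" where "p \<in> indep_pairs" by blast
    have "0 \<le> \<rho> * real CARD('b)"
      using rare[OF \<open>p \<in> indep_pairs\<close>] by (rule order_trans[rotated]) simp
    then have "0 \<le> \<rho>^m"
      by (simp add: zero_le_mult_iff)
    with card_indep_pairs_le[where 'a='a and 'n='n]
    have "card (indep_pairs :: (('a^'n) \<times> ('a^'n)) set) * \<rho>^m \<le> real ?q^(2 * CARD('n)) * \<rho>^m"
      by (intro mult_right_mono) (simp_all flip: of_nat_power)
    with small \<open>2 \<le> ?q\<close> show ?thesis by (simp add: of_nat_diff)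
  qed
  moreover have "?q * (?q - 1) \<le> card {p \<in> indep_pairs. \<forall>i<m. ?R p (bs i)}"
    if "\<exists>p\<in>indep_pairs. \<forall>i<m. ?R p (bs i)" for bs
  proof -
    from that obtain p where "p \<in> indep_pairs" "\<forall>i<m. confined p (Sp (bs i))" by blast
    then have "?q * (?q - 1) \<le> card {p' \<in> indep_pairs. \<forall>W\<in>(\<lambda>i. Sp (bs i)) ` {..<m}. confined p' W}"
      by (intro card_confining_pairs_ge) auto
    moreover have "{p' \<in> indep_pairs. \<forall>W\<in>(\<lambda>i. Sp (bs i)) ` {..<m}. confined p' W}
        = {p \<in> indep_pairs. \<forall>i<m. ?R p (bs i)}"
      by auto
    ultimately show ?thesis by simp
  qed
  ultimately show ?thesis
    using exists_tuple_avoiding[of UNIV indep_pairs m ?R "?q * (?q - 1)" \<rho>] rare by auto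
qed

lemma exists_strong_blocking_set_of_subspaces:
  fixes Sp :: "'b::finite \<Rightarrow> ('a::{field,finite}^'n) set" and \<rho> :: real
  assumes subspace: "\<And>\<beta>. vec.subspace (Sp \<beta>)"
    and few_points: "\<And>\<beta>. card {P \<in> proj_points. P \<subseteq> Sp \<beta>} \<le> s"
    and rare: "\<And>p. p \<in> indep_pairs \<Longrightarrow> real (card {\<beta>. confined p (Sp \<beta>)}) \<le> \<rho> * CARD('b)"
    and small: "real CARD('a)^(2 * CARD('n)) * \<rho>^m < real CARD('a) * (real CARD('a) - 1)"
  shows "\<exists>S :: ('a^'n) set set. strong_blocking_set S \<and> card S \<le> s * m"
proof -
  obtain bs where bs: "\<forall>p\<in>indep_pairs. \<exists>i<m. \<not> confined p (Sp (bs i))"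
    using exists_unconfined_tuple[OF rare small] by blast
  let ?W = "(\<lambda>i. Sp (bs i)) ` {..<m}"
  have "strong_blocking_set {P \<in> proj_points. \<exists>W\<in>?W. P \<subseteq> W}"
    using bs by (intro strong_blocking_set_if_unconfined) (auto simp: subspace)
  moreover have "card {P \<in> proj_points. \<exists>W\<in>?W. P \<subseteq> W} \<le> s * card ?W"
    using few_points by (intro card_points_in_Union_le) auto
  moreover have "card ?W \<le> m"
    using card_image_le[of "{..<m}"] by simp
  ultimately show ?thesis
    by (meson mult_le_mono2 order_trans)
qed

lemma exists_strong_blocking_set_of_points:
  assumes "real CARD('a)^(2 * CARD('n)) * ((real CARD('a)^2 - real CARD('a) + 1) / real CARD('a)^2)^m
    < real CARD('a) * (real CARD('a) - 1)"
  shows "\<exists>S :: ('a::{field,finite}^'n) set set. strong_blocking_set S \<and> card S \<le> m"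
  using exists_strong_blocking_set_of_subspaces[of "\<lambda>u. vec.span {u}" 1 _ m, OF vec.subspace_span
      card_points_in_span_singleton card_confined_points_le assms] by simp

lemma exists_strong_blocking_set_of_lines:
  assumes "real CARD('a)^(2 * CARD('n)) * ((real CARD('a)^3 - real CARD('a) + 1) / real CARD('a)^4)^m
    < real CARD('a) * (real CARD('a) - 1)"
  shows "\<exists>S :: ('a::{field,finite}^'n) set set. strong_blocking_set S \<and> card S \<le> (CARD('a) + 1) * m"
proof -
  have rare: "real (card {\<beta>. confined p (vec.span {fst \<beta>, snd \<beta>})})
      \<le> (real CARD('a)^3 - real CARD('a) + 1) / real CARD('a)^4 * real CARD(('a^'n) \<times> ('a^'n))"
    if "p \<in> indep_pairs" for p :: "('a^'n) \<times> ('a^'n)"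
    using card_confined_lines_le[OF that] by (simp add: case_prod_beta')
  show ?thesis
    using exists_strong_blocking_set_of_subspaces[of "\<lambda>\<beta>. vec.span {fst \<beta>, snd \<beta>}" "CARD('a) + 1" _ m,
        OF vec.subspace_span card_points_in_span_pair rare assms] by simp
qed

section \<open>Numerical estimates\<close>

lemma power_le_power_Suc_floor_log:
  fixes b R :: real
  assumes "1 < b" "1 < R"
  shows "b ^ n \<le> R ^ Suc (nat \<lfloor>n / log b R\<rfloor>)"
proof -
  have "0 < log b R" using assms by simp
  have "b ^ n = R powr (n / log b R)"
    using assms by (simp add: powr_def log_def powr_realpow[symmetric])
  also have "\<dots> \<le> R powr real (Suc (nat \<lfloor>n / log b R\<rfloor>))"
    using assms(2) \<open>0 < log b R\<close> by (intro powr_mono) linarith+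
  also have "\<dots> = R ^ Suc (nat \<lfloor>n / log b R\<rfloor>)"
    by (rule powr_realpow) (use assms(2) in simp)
  finally show ?thesis .
qed

lemma line_ratio_denominator_pos:
  fixes q :: real
  assumes "1 \<le> q"
  shows "0 < q^3 - q + 1"
proof -
  have "1 \<le> q * q"
    using mult_mono[of 1 q 1 q] assms by simp
  then have "q \<le> q^3"
    using mult_left_mono[of 1 "q * q" q] assms by (simp add: power3_eq_cube)
  then show ?thesis by simp
qed

lemma one_less_line_ratio:
  fixes q :: real
  assumes "2 \<le> q"
  shows "1 < q^4 / (q^3 - q + 1)"
proof -
  have "2 * q^3 \<le> q * q^3"
    using assms by (intro mult_right_mono) simp_all
  then have "2 * q^3 \<le> q^4"
    by (simp add: power3_eq_cube power4_eq_xxxx mult_ac)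
  moreover have "0 < q^3 - q + 1"
    using assms by (intro line_ratio_denominator_pos) simp
  ultimately show ?thesis
    using assms by simp
qed

lemma line_ratio_less:
  fixes q :: real
  assumes "3 \<le> q"
  shows "q^4 / (q^3 - q + 1) < q * (q - 1)"
proof -
  have "q^3 * 1 \<le> q^3 * (q - 2)"
    using assms by (intro mult_left_mono) simp_all
  then have "q^3 \<le> q^3 * q - 2 * q^3"
    by (simp add: right_diff_distrib)
  moreover have "q^2 * 3 \<le> q^2 * q"
    using assms by (intro mult_left_mono) simp_all
  then have "3 * q^2 \<le> q^3"
    by (simp add: power2_eq_square power3_eq_cube mult.commute)
  moreover have "q^4 = q^3 * q" "0 \<le> q^2"
    by (simp_all add: power3_eq_cube power4_eq_xxxx)
  ultimately have "0 < q^4 - 2 * q^3 - q^2 + 2 * q - 1"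
    using assms by linarith
  then have "0 < q * (q^4 - 2 * q^3 - q^2 + 2 * q - 1)"
    using assms by simp
  then have "q^4 < q * (q - 1) * (q^3 - q + 1)"
    by (simp add: algebra_simps power2_eq_square power3_eq_cube power4_eq_xxxx)
  moreover have "0 < q^3 - q + 1"
    using assms by (intro line_ratio_denominator_pos) simp
  ultimately show ?thesis
    by (simp add: divide_less_eq)
qed

lemma lines_union_bound:
  fixes q :: real
  assumes "3 \<le> q"
  shows "q^(2 * k) * ((q^3 - q + 1) / q^4) ^ nat \<lfloor>2 * real k / log q (q^4 / (q^3 - q + 1))\<rfloor>
    < q * (q - 1)"
proof -
  define R where "R = q^4 / (q^3 - q + 1)"
  define m where "m = nat \<lfloor>2 * real k / log q R\<rfloor>"
  have "1 < R"
    unfolding R_def using assms by (intro one_less_line_ratio) simp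
  have "q^(2 * k) \<le> R ^ Suc m"
    unfolding m_def using power_le_power_Suc_floor_log[of q R "2 * k"] assms \<open>1 < R\<close> by simp
  then have "q^(2 * k) * (1 / R) ^ m \<le> R ^ Suc m * (1 / R) ^ m"
    using \<open>1 < R\<close> by (intro mult_right_mono) simp_all
  also have "\<dots> = R"
    using \<open>1 < R\<close> by (simp add: power_one_over field_simps)
  also have "R < q * (q - 1)"
    unfolding R_def using assms by (rule line_ratio_less)
  finally show ?thesis
    unfolding R_def m_def by simp
qed

lemma points_union_bound_q2:
  "(2::real)^(2 * k) * (3 / 4) ^ nat \<lfloor>3 * (2 * real k) / log 2 (16 / 7)\<rfloor> < 2"
proof -
  define M where "M = nat \<lfloor>3 * (2 * real k) / log 2 (16 / 7)\<rfloor>"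
  have "log 2 (16 / 7) \<le> log 2 ((4 / 3)^3)"
    by (simp add: power_divide)
  then have "log 2 (16 / 7) \<le> 3 * log 2 (4 / 3)"
    by (simp add: log_nat_power)
  then have "2 * real k / log 2 (4 / 3) \<le> 3 * (2 * real k) / log 2 (16 / 7)"
    by (simp add: field_simps mult_left_mono)
  then have "nat \<lfloor>2 * real k / log 2 (4 / 3)\<rfloor> \<le> M"
    unfolding M_def by (intro nat_mono floor_mono)
  have "(2::real)^(2 * k) \<le> (4 / 3) ^ Suc (nat \<lfloor>2 * real k / log 2 (4 / 3)\<rfloor>)"
    using power_le_power_Suc_floor_log[of 2 "4 / 3" "2 * k"] by simp
  also have "\<dots> \<le> (4 / 3) ^ Suc M"
    by (rule power_increasing) (use \<open>nat \<lfloor>2 * real k / log 2 (4 / 3)\<rfloor> \<le> M\<close> in simp_all)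
  finally have "(2::real)^(2 * k) * (3 / 4) ^ M \<le> (4 / 3) ^ Suc M * (3 / 4) ^ M"
    by (intro mult_right_mono) simp_all
  also have "\<dots> = 4 / 3"
    by (simp add: power_mult_distrib[symmetric])
  finally show ?thesis unfolding M_def by simp
qed

lemma exists_strong_blocking_set_q2:
  assumes "CARD('a) = 2"
  shows "\<exists>S :: ('a::{field,finite}^'n) set set. strong_blocking_set S \<and>
    real (card S) \<le> 3 * (2 * real CARD('n)) / log 2 (16 / 7)"
proof -
  define M where "M = nat \<lfloor>3 * (2 * real CARD('n)) / log 2 (16 / 7)\<rfloor>"
  have "real CARD('a)^(2 * CARD('n)) * ((real CARD('a)^2 - real CARD('a) + 1) / real CARD('a)^2)^M
      < real CARD('a) * (real CARD('a) - 1)"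
    using points_union_bound_q2[of "CARD('n)"] assms unfolding M_def by simp
  then obtain S :: "('a^'n) set set" where "strong_blocking_set S" "card S \<le> M"
    using exists_strong_blocking_set_of_points by blast
  moreover have "real M \<le> 3 * (2 * real CARD('n)) / log 2 (16 / 7)"
    unfolding M_def by simp
  ultimately show ?thesis by auto
qed

lemma exists_strong_blocking_set_q_ge_3:
  assumes "3 \<le> CARD('a)"
  shows "\<exists>S :: ('a::{field,finite}^'n) set set. strong_blocking_set S \<and>
    real (card S) \<le> (real CARD('a) + 1) *
      (2 * real CARD('n) / log (real CARD('a)) (real CARD('a)^4 / (real CARD('a)^3 - real CARD('a) + 1)))"
proof -
  let ?q = "real CARD('a)"
  define L where "L = log ?q (?q^4 / (?q^3 - ?q + 1))"
  define m where "m = nat \<lfloor>2 * real CARD('n) / L\<rfloor>"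
  have "0 < L"
    unfolding L_def using one_less_line_ratio[of ?q] assms by simp
  have "?q^(2 * CARD('n)) * ((?q^3 - ?q + 1) / ?q^4)^m < ?q * (?q - 1)"
    using lines_union_bound[of ?q "CARD('n)"] assms unfolding m_def L_def by simp
  then obtain S :: "('a^'n) set set" where "strong_blocking_set S" "card S \<le> (CARD('a) + 1) * m"
    using exists_strong_blocking_set_of_lines by blast
  then have "real (card S) \<le> (?q + 1) * real m"
    by (metis of_nat_1 of_nat_add of_nat_le_iff of_nat_mult)
  also have "\<dots> \<le> (?q + 1) * (2 * real CARD('n) / L)"
    unfolding m_def using \<open>0 < L\<close> by (intro mult_left_mono) simp_all
  finally show ?thesis
    using \<open>strong_blocking_set S\<close> unfolding L_def by blast
qed

theorem theorem1p3:
  assumes "CARD('n) \<ge> 2"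
  shows "\<exists>S :: ('a::{finite,field} ^ 'n::finite) set set. strong_blocking_set S \<and>
    real (card S) \<le> (real CARD('a) + 1) * (2 * real CARD('n)) /
      log (real CARD('a)) ((real CARD('a))^4 / ((real CARD('a))^3 - real CARD('a) + 1))"
proof -
  consider "CARD('a) = 2" | "3 \<le> CARD('a)"
    using two_le_card_field[where 'a='a] by linarith
  then show ?thesis
  proof cases
    case 1
    then show ?thesis
      using exists_strong_blocking_set_q2[where 'a='a and 'n='n] by simp
  next
    case 2
    then show ?thesis
      using exists_strong_blocking_set_q_ge_3[where 'a='a and 'n='n] by (simp add: times_divide_eq_right)
  qed
qed

end
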